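(* Let $f:E\to X$ be a fibrewise pointed map over $B$. Then $\mathrm{secat}_B(f)\le\mathrm{cat}^*_B(X)$. If moreover $E$ is fibrewise contractible, then $\mathrm{secat}_B(f)=\mathrm{cat}^*_B(X)$.
   Context: Fibrewise space over $B$: a space $X$ with a map $p_X:X\to B$; fibrewise map: $p_Yf=p_X$; fibrewise pointed space: with a section $s_X$ of $p_X$; fibrewise pointed map: fibrewise map with $fs_E=s_X$. Fibrewise homotopy: $H:X\times[0,1]\to Y$ with $p_Y(H(x,t))=p_X(x)$ ($\simeq_B$). A fibrewise space is fibrewise contractible if it is fibrewise homotopy equivalent to $B$ (with projection $\mathrm{id}_B$). $\mathrm{secat}_B(f)$: least $n$ such that $X$ is covered by $n+1$ open sets $U$ each with a fibrewise map $s:U\to E$, $fs\simeq_B$ the inclusion $U\hookrightarrow X$. $\mathrm{cat}^*_B(X)$: least $n$ such that $X$ is covered by $n+1$ open sets $U_i$ with inclusion $U_i\hookrightarrow X$ fibrewise homotopic to $s_X\circ p_X|_{U_i}$. Both $\infty$ if no such $n$. *)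

theory Defs
  imports "HOL-Analysis.Analysis" "HOL-Library.Extended_Nat"
begin

definition fibrewise_space :: "'b topology \<Rightarrow> 'x topology \<Rightarrow> ('x \<Rightarrow> 'b) \<Rightarrow> bool" where
  "fibrewise_space B X p \<longleftrightarrow> continuous_map X B p"

definition fibrewise_pointed_space ::
  "'b topology \<Rightarrow> 'x topology \<Rightarrow> ('x \<Rightarrow> 'b) \<Rightarrow> ('b \<Rightarrow> 'x) \<Rightarrow> bool" where
  "fibrewise_pointed_space B X p s \<longleftrightarrow>
     fibrewise_space B X p \<and> continuous_map B X s \<and> (\<forall>b\<in>topspace B. p (s b) = b)"

definition fibrewise_map ::
  "'x topology \<Rightarrow> ('x \<Rightarrow> 'b) \<Rightarrow> 'y topology \<Rightarrow> ('y \<Rightarrow> 'b) \<Rightarrow> ('x \<Rightarrow> 'y) \<Rightarrow> bool" where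
  "fibrewise_map X pX Y pY f \<longleftrightarrow>
     continuous_map X Y f \<and> (\<forall>x\<in>topspace X. pY (f x) = pX x)"

definition fibrewise_pointed_map ::
  "'b topology \<Rightarrow> 'x topology \<Rightarrow> ('x \<Rightarrow> 'b) \<Rightarrow> ('b \<Rightarrow> 'x)
     \<Rightarrow> 'y topology \<Rightarrow> ('y \<Rightarrow> 'b) \<Rightarrow> ('b \<Rightarrow> 'y) \<Rightarrow> ('x \<Rightarrow> 'y) \<Rightarrow> bool" where
  "fibrewise_pointed_map B X pX sX Y pY sY f \<longleftrightarrow>
     fibrewise_map X pX Y pY f \<and> (\<forall>b\<in>topspace B. f (sX b) = sY b)"

definition fibrewise_homotopic ::
  "'x topology \<Rightarrow> ('x \<Rightarrow> 'b) \<Rightarrow> 'y topology \<Rightarrow> ('y \<Rightarrow> 'b) \<Rightarrow> ('x \<Rightarrow> 'y) \<Rightarrow> ('x \<Rightarrow> 'y) \<Rightarrow> bool" where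
  "fibrewise_homotopic X pX Y pY g h \<longleftrightarrow>
     homotopic_with (\<lambda>k. \<forall>x\<in>topspace X. pY (k x) = pX x) X Y g h"

definition fibrewise_contractible :: "'b topology \<Rightarrow> 'e topology \<Rightarrow> ('e \<Rightarrow> 'b) \<Rightarrow> bool" where
  "fibrewise_contractible B E pE \<longleftrightarrow>
     (\<exists>g h. fibrewise_map E pE B id g \<and> fibrewise_map B id E pE h \<and>
            fibrewise_homotopic E pE E pE (h \<circ> g) id \<and>
            fibrewise_homotopic B id B id (g \<circ> h) id)"

text \<open>Fibrewise sectional category of f : E \<rightarrow> X (value \<infinity> if no finite cover exists).\<close>
definition secat_B ::
  "'e topology \<Rightarrow> ('e \<Rightarrow> 'b) \<Rightarrow> 'x topology \<Rightarrow> ('x \<Rightarrow> 'b) \<Rightarrow> ('e \<Rightarrow> 'x) \<Rightarrow> enat" where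
  "secat_B E pE X pX f = Inf {enat n | n. \<exists>U :: nat \<Rightarrow> 'x set.
       topspace X \<subseteq> (\<Union>i\<le>n. U i) \<and>
       (\<forall>i\<le>n. openin X (U i) \<and>
          (\<exists>s. fibrewise_map (subtopology X (U i)) pX E pE s \<and>
               fibrewise_homotopic (subtopology X (U i)) pX X pX (f \<circ> s) id))}"

text \<open>Fibrewise pointed LS category of X (value \<infinity> if no finite cover exists).\<close>
definition cat_star_B :: "'x topology \<Rightarrow> ('x \<Rightarrow> 'b) \<Rightarrow> ('b \<Rightarrow> 'x) \<Rightarrow> enat" where
  "cat_star_B X pX sX = Inf {enat n | n. \<exists>U :: nat \<Rightarrow> 'x set.
       topspace X \<subseteq> (\<Union>i\<le>n. U i) \<and>
       (\<forall>i\<le>n. openin X (U i) \<and>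
          fibrewise_homotopic (subtopology X (U i)) pX X pX id (sX \<circ> pX))}"

end

theory Submission
  imports Defs
begin

text \<open>A fibrewise null-homotopy of the inclusion of U (i.e. one to sX \<circ> pX) yields the local
section sE \<circ> pX of f, because f is pointed. Conversely, if E is fibrewise contractible, every
fibrewise map into E is fibrewise homotopic to sE composed with the projection, so any local
homotopy section s of f gives id \<simeq> f \<circ> s \<simeq> f \<circ> sE \<circ> pX = sX \<circ> pX over U. Hence the two kinds
of open sets coincide, and so do the two invariants.\<close>

lemma fibrewise_homotopic_sym:
  "fibrewise_homotopic X pX Y pY g h \<Longrightarrow> fibrewise_homotopic X pX Y pY h g"
  unfolding fibrewise_homotopic_def by (rule homotopic_with_symD)

lemma fibrewise_homotopic_trans:
  "fibrewise_homotopic X pX Y pY g h \<Longrightarrow> fibrewise_homotopic X pX Y pY h k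
    \<Longrightarrow> fibrewise_homotopic X pX Y pY g k"
  unfolding fibrewise_homotopic_def by (rule homotopic_with_trans)

lemma fibrewise_homotopic_eq:
  assumes "fibrewise_homotopic X pX Y pY g h"
    and "\<And>x. x \<in> topspace X \<Longrightarrow> g' x = g x" "\<And>x. x \<in> topspace X \<Longrightarrow> h' x = h x"
  shows "fibrewise_homotopic X pX Y pY g' h'"
proof -
  let ?P = "\<lambda>k. \<forall>x\<in>topspace X. pY (k x) = pX x"
  have gh: "homotopic_with ?P X Y g h"
    using assms(1) unfolding fibrewise_homotopic_def .
  have g_props: "continuous_map X Y g" "?P g" and h_props: "continuous_map X Y h" "?P h"
    using homotopic_with_imp_continuous_maps[OF gh] homotopic_with_imp_property[OF gh] by auto
  have "continuous_map X Y g'"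
    using continuous_map_eq[OF g_props(1)] assms(2) by metis
  then have "homotopic_with ?P X Y g' g"
    by (rule homotopic_with_equal[rotated 2]) (use g_props assms(2) in auto)
  moreover have "homotopic_with ?P X Y h h'"
    by (rule homotopic_with_equal[rotated 2]) (use h_props assms(3) in auto)
  ultimately show ?thesis
    unfolding fibrewise_homotopic_def using gh by (blast intro: homotopic_with_trans)
qed

lemma fibrewise_homotopic_compose_left:
  assumes "fibrewise_homotopic X pX Y pY g h" and "fibrewise_map Y pY Z pZ k"
  shows "fibrewise_homotopic X pX Z pZ (k \<circ> g) (k \<circ> h)"
proof -
  have "homotopic_with (\<lambda>j. continuous_map X Y j \<and> (\<forall>x\<in>topspace X. pY (j x) = pX x)) X Y g h"
    using assms(1) unfolding fibrewise_homotopic_def by (rule homotopic_with_mono) blast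
  then show ?thesis
    using assms(2) unfolding fibrewise_homotopic_def fibrewise_map_def
    by (elim conjE homotopic_with_compose_continuous_map_left)
       (auto dest!: continuous_map_image_subset_topspace)
qed

lemma fibrewise_homotopic_compose_right:
  assumes "fibrewise_homotopic Y pY Z pZ g h" and "fibrewise_map X pX Y pY k"
  shows "fibrewise_homotopic X pX Z pZ (g \<circ> k) (h \<circ> k)"
  using assms unfolding fibrewise_homotopic_def fibrewise_map_def
  by (elim conjE homotopic_with_compose_continuous_map_right)
     (auto dest!: continuous_map_image_subset_topspace)

lemma fibrewise_map_section_comp:
  assumes "fibrewise_space B U pU" and "fibrewise_pointed_space B E pE sE"
  shows "fibrewise_map U pU E pE (sE \<circ> pU)"
  using assms continuous_map_image_subset_topspace[of U B pU]
  unfolding fibrewise_map_def fibrewise_pointed_space_def fibrewise_space_def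
  by (auto intro: continuous_map_compose)

lemma fibrewise_space_subtopology:
  "fibrewise_space B X pX \<Longrightarrow> fibrewise_space B (subtopology X V) pX"
  unfolding fibrewise_space_def by (rule continuous_map_from_subtopology)

lemma fibrewise_pointed_map_section_comp:
  assumes "fibrewise_space B U pU" and "fibrewise_pointed_map B E pE sE X pX sX f"
    and "u \<in> topspace U"
  shows "f (sE (pU u)) = sX (pU u)"
  using assms continuous_map_image_subset_topspace[of U B pU]
  unfolding fibrewise_space_def fibrewise_pointed_map_def by auto

lemma fibrewise_nullhomotopic_imp_lift:
  assumes U: "fibrewise_space B U pU" and E: "fibrewise_pointed_space B E pE sE"
    and f: "fibrewise_pointed_map B E pE sE X pX sX f"
    and j: "fibrewise_homotopic U pU X pX j (sX \<circ> pU)"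
  shows "\<exists>s. fibrewise_map U pU E pE s \<and> fibrewise_homotopic U pU X pX (f \<circ> s) j"
proof (intro exI conjI)
  show "fibrewise_map U pU E pE (sE \<circ> pU)"
    using U E by (rule fibrewise_map_section_comp)
  show "fibrewise_homotopic U pU X pX (f \<circ> (sE \<circ> pU)) j"
    by (rule fibrewise_homotopic_eq[OF fibrewise_homotopic_sym[OF j]])
       (simp_all add: fibrewise_pointed_map_section_comp[OF U f])
qed

lemma fibrewise_contractible_homotopic_section:
  assumes C: "fibrewise_contractible B E pE" and E: "fibrewise_pointed_space B E pE sE"
    and U: "fibrewise_space B U pU" and s: "fibrewise_map U pU E pE s"
  shows "fibrewise_homotopic U pU E pE s (sE \<circ> pU)"
proof -
  obtain g h where g: "fibrewise_map E pE B id g"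
    and hg: "fibrewise_homotopic E pE E pE (h \<circ> g) id"
    using C unfolding fibrewise_contractible_def by blast
  have g_eq: "\<And>e. e \<in> topspace E \<Longrightarrow> g e = pE e"
    using g unfolding fibrewise_map_def by auto
  have sE: "fibrewise_map B id E pE sE" and pE_sE: "\<And>b. b \<in> topspace B \<Longrightarrow> pE (sE b) = b"
    and sE_in: "\<And>b. b \<in> topspace B \<Longrightarrow> sE b \<in> topspace E"
    using E continuous_map_image_subset_topspace[of B E sE]
    unfolding fibrewise_pointed_space_def fibrewise_map_def by auto
  have h_sE: "fibrewise_homotopic B id E pE h sE"
    using fibrewise_homotopic_compose_right[OF hg sE]
    by (rule fibrewise_homotopic_eq) (auto simp: g_eq sE_in pE_sE)
  have pU: "fibrewise_map U pU B id pU"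
    using U unfolding fibrewise_space_def fibrewise_map_def by simp
  have s_in: "\<And>u. u \<in> topspace U \<Longrightarrow> s u \<in> topspace E \<and> pE (s u) = pU u"
    using s continuous_map_image_subset_topspace[of U E s] unfolding fibrewise_map_def by auto
  have "fibrewise_homotopic U pU E pE (id \<circ> s) ((h \<circ> g) \<circ> s)"
    using fibrewise_homotopic_compose_right[OF hg s] by (rule fibrewise_homotopic_sym)
  then have "fibrewise_homotopic U pU E pE s (h \<circ> pU)"
    by (rule fibrewise_homotopic_eq) (simp_all add: g_eq s_in)
  then show ?thesis
    using fibrewise_homotopic_compose_right[OF h_sE pU] by (rule fibrewise_homotopic_trans)
qed

lemma fibrewise_lift_imp_nullhomotopic:
  assumes C: "fibrewise_contractible B E pE" and E: "fibrewise_pointed_space B E pE sE"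
    and f: "fibrewise_pointed_map B E pE sE X pX sX f"
    and U: "fibrewise_space B U pU" and s: "fibrewise_map U pU E pE s"
    and fs: "fibrewise_homotopic U pU X pX (f \<circ> s) j"
  shows "fibrewise_homotopic U pU X pX j (sX \<circ> pU)"
proof -
  have "fibrewise_homotopic U pU X pX (f \<circ> s) (f \<circ> (sE \<circ> pU))"
    using fibrewise_contractible_homotopic_section[OF C E U s] f
    unfolding fibrewise_pointed_map_def by (blast intro: fibrewise_homotopic_compose_left)
  then have "fibrewise_homotopic U pU X pX (f \<circ> s) (sX \<circ> pU)"
    by (elim fibrewise_homotopic_eq) (simp_all add: fibrewise_pointed_map_section_comp[OF U f])
  then show ?thesis
    using fibrewise_homotopic_sym[OF fs] by (rule fibrewise_homotopic_trans[rotated])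
qed

text \<open>The least n such that n+1 open sets with property P cover X, or \<infinity> if there is none.\<close>
definition open_cover_number :: "'x topology \<Rightarrow> ('x set \<Rightarrow> bool) \<Rightarrow> enat" where
  "open_cover_number X P = Inf {enat n | n. \<exists>U :: nat \<Rightarrow> 'x set.
     topspace X \<subseteq> (\<Union>i\<le>n. U i) \<and> (\<forall>i\<le>n. openin X (U i) \<and> P (U i))}"

lemma open_cover_number_mono:
  assumes "\<And>U. openin X U \<Longrightarrow> P U \<Longrightarrow> Q U"
  shows "open_cover_number X Q \<le> open_cover_number X P"
  unfolding open_cover_number_def by (rule Inf_superset_mono) (use assms in blast)

lemma secat_B_eq_open_cover_number:
  "secat_B E pE X pX f = open_cover_number X (\<lambda>U. \<exists>s. fibrewise_map (subtopology X U) pX E pE s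
     \<and> fibrewise_homotopic (subtopology X U) pX X pX (f \<circ> s) id)"
  unfolding secat_B_def open_cover_number_def ..

lemma cat_star_B_eq_open_cover_number:
  "cat_star_B X pX sX
     = open_cover_number X (\<lambda>U. fibrewise_homotopic (subtopology X U) pX X pX id (sX \<circ> pX))"
  unfolding cat_star_B_def open_cover_number_def ..

lemma secat_B_le_cat_star_B:
  assumes "fibrewise_pointed_space B E pE sE" and "fibrewise_pointed_space B X pX sX"
    and "fibrewise_pointed_map B E pE sE X pX sX f"
  shows "secat_B E pE X pX f \<le> cat_star_B X pX sX"
proof -
  have subspace: "\<And>U. fibrewise_space B (subtopology X U) pX"
    using assms(2) unfolding fibrewise_pointed_space_def by (blast intro: fibrewise_space_subtopology)
  show ?thesis
    unfolding secat_B_eq_open_cover_number cat_star_B_eq_open_cover_number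
    by (rule open_cover_number_mono)
       (use fibrewise_nullhomotopic_imp_lift[OF _ assms(1,3)] subspace in blast)
qed

lemma cat_star_B_le_secat_B:
  assumes "fibrewise_contractible B E pE"
    and "fibrewise_pointed_space B E pE sE" and "fibrewise_pointed_space B X pX sX"
    and "fibrewise_pointed_map B E pE sE X pX sX f"
  shows "cat_star_B X pX sX \<le> secat_B E pE X pX f"
proof -
  have subspace: "\<And>U. fibrewise_space B (subtopology X U) pX"
    using assms(3) unfolding fibrewise_pointed_space_def by (blast intro: fibrewise_space_subtopology)
  show ?thesis
    unfolding secat_B_eq_open_cover_number cat_star_B_eq_open_cover_number
    by (rule open_cover_number_mono)
       (use fibrewise_lift_imp_nullhomotopic[OF assms(1,2,4)] subspace in blast)
qed

theorem proposition2p2: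
  fixes B :: "'b topology" and E :: "'e topology" and X :: "'x topology"
    and pE :: "'e \<Rightarrow> 'b" and sE :: "'b \<Rightarrow> 'e"
    and pX :: "'x \<Rightarrow> 'b" and sX :: "'b \<Rightarrow> 'x"
    and f :: "'e \<Rightarrow> 'x"
  assumes "fibrewise_pointed_space B E pE sE"
    and "fibrewise_pointed_space B X pX sX"
    and "fibrewise_pointed_map B E pE sE X pX sX f"
  shows "secat_B E pE X pX f \<le> cat_star_B X pX sX \<and>
         (fibrewise_contractible B E pE \<longrightarrow> secat_B E pE X pX f = cat_star_B X pX sX)"
  using secat_B_le_cat_star_B[OF assms] cat_star_B_le_secat_B[OF _ assms]
  by (auto intro: order.antisym)

end
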